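(* Let $n,m$ be non-negative integers and let $\mathrm{S}(1_n,1_m)$ be the set of permutations $\sigma\in S_{n+m}$ with $\sigma^{-1}(1)<\cdots<\sigma^{-1}(n)$ and $\sigma^{-1}(n+1)<\cdots<\sigma^{-1}(n+m)$. Then \[\sum_{\sigma\in\mathrm{S}(1_n,1_m)}(-1)^{p_-(\sigma)}C\bigl(p_-(\sigma),\lfloor (n+m)/2\rfloor-p_-(\sigma)\bigr)=\begin{cases}C(0,\lfloor n/2\rfloor)\,C(0,\lfloor m/2\rfloor)&\text{if } n \text{ or } m\text{ is even},\\ 4\,C(0,\lfloor n/2\rfloor)\,C(0,\lfloor m/2\rfloor)&\text{if } n\text{ and } m\text{ are odd},\end{cases}\] and, when $n\equiv m\pmod 2$ (so that $n+m$ is even), \[\sum_{\sigma\in\mathrm{S}(1_n,1_m)}(-1)^{p_+(\sigma)}C\bigl(p_+(\sigma),(n+m)/2-p_+(\sigma)\bigr)=\begin{cases}C(0,n/2)\,C(0,m/2)&\text{if } n\text{ and } m\text{ are even},\\0&\text{if } n\text{ and } m\text{ are odd.}\end{cases}\]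
   Context: For $\sigma\in S_N$, with the convention $\sigma(0)=0$, $p_+(\sigma)=\#\{i\in\{1,\ldots,N-1\}:\sigma(i-1)<\sigma(i)>\sigma(i+1)\}$ and $p_-(\sigma)=\#\{i\in\{2,\ldots,N-1\}:\sigma(i-1)<\sigma(i)>\sigma(i+1)\}$. $C(p,q)=\frac{(2p)!(2q)!}{p!(p+q)!q!}$ (so $C(0,q)=\binom{2q}{q}$). *)

theory Defs
  imports Complex_Main "HOL-Combinatorics.Permutations"
begin

text \<open>Permutations of {1..N} are functions nat => nat permuting {1..N}.
  The convention sigma(0) = 0 is built in explicitly via ext0.\<close>

definition ext0 :: "(nat \<Rightarrow> nat) \<Rightarrow> nat \<Rightarrow> nat" where
  "ext0 \<sigma> i = (if i = 0 then 0 else \<sigma> i)"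

definition pplus :: "nat \<Rightarrow> (nat \<Rightarrow> nat) \<Rightarrow> nat" where
  "pplus N \<sigma> = card {i \<in> {1..N - 1}. ext0 \<sigma> (i - 1) < ext0 \<sigma> i \<and> ext0 \<sigma> i > ext0 \<sigma> (i + 1)}"

definition pminus :: "nat \<Rightarrow> (nat \<Rightarrow> nat) \<Rightarrow> nat" where
  "pminus N \<sigma> = card {i \<in> {2..N - 1}. ext0 \<sigma> (i - 1) < ext0 \<sigma> i \<and> ext0 \<sigma> i > ext0 \<sigma> (i + 1)}"

definition superC :: "nat \<Rightarrow> nat \<Rightarrow> real" where
  "superC p q = fact (2 * p) * fact (2 * q) / (fact p * fact (p + q) * fact q)"

definition shuffleS :: "nat \<Rightarrow> nat \<Rightarrow> (nat \<Rightarrow> nat) set" where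
  "shuffleS n m = {\<sigma>. \<sigma> permutes {1..n + m} \<and>
      (\<forall>i j. 1 \<le> i \<and> i < j \<and> j \<le> n \<longrightarrow> inv \<sigma> i < inv \<sigma> j) \<and>
      (\<forall>i j. n + 1 \<le> i \<and> i < j \<and> j \<le> n + m \<longrightarrow> inv \<sigma> i < inv \<sigma> j)}"

end

theory Submission
  imports Defs "HOL-Computational_Algebra.Polynomial"
begin

text \<open>
  Record a shuffle sigma as the binary word whose i-th letter says whether sigma(i) > n. This is a
  bijection onto the words with n letters False and m letters True, and it turns the peaks of sigma
  into the descents True False of the word (p_- ignores the first letter). There are
  (n choose k) (m choose k) words with k descents, so for n + m = 2M the p_+ sum is
  sum_k (n choose k) (m choose k) (-1)^k C(k, M - k). Since (-1)^k C(k, M - k) is the coefficient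
  of x^M in (x - 1)^(2k) (x + 1)^(2M - 2k), this is the coefficient of x^M y^m in
  ((1 + y) x + (1 - y))^n ((1 + y) x - (1 - y))^m, which factors as the coefficient of y^m in
  (1 - y^2)^M times the coefficient of x^M in (x + 1)^n (x - 1)^m. Splitting off the first letter
  reduces the p_- sum to p_+ sums of shorter words; when n + m is even the recurrence
  C(k + 1, q) + C(k, q + 1) = 4 C(k, q) is needed to bring them to the right length.
\<close>

section \<open>Super Catalan numbers\<close>

lemma superC_Suc_left: "superC (Suc p) q = 2 * (2 * p + 1) / (p + q + 1) * superC p q"
proof -
  have "fact (2 * Suc p) = (2 * real p + 1) * (2 * real p + 2) * (fact (2 * p) :: real)"
       "fact (Suc p + q) = (real p + real q + 1) * (fact (p + q) :: real)"
       "fact (Suc p) = (real p + 1) * (fact p :: real)"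
    by (simp_all add: fact_Suc algebra_simps)
  then have "superC (Suc p) q = ((2 * real p + 2) / (real p + 1)) * ((2 * real p + 1) / (real p + real q + 1))
      * (fact (2 * p) * fact (2 * q) / (fact p * fact (p + q) * fact q))"
    unfolding superC_def by (simp add: field_simps)
  also have "(2 * real p + 2) / (real p + 1) = 2"
    by (simp add: field_simps)
  finally show ?thesis
    unfolding superC_def by simp
qed

lemma superC_commute: "superC p q = superC q p"
  unfolding superC_def by (simp add: add.commute mult.commute mult.left_commute)

lemma superC_Suc_left_add_Suc_right: "superC (Suc p) q + superC p (Suc q) = 4 * superC p q"
proof -
  have "superC p (Suc q) = 2 * (2 * q + 1) / (p + q + 1) * superC p q"
    using superC_Suc_left[of q p] by (simp add: superC_commute add.commute)
  then show ?thesis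
    unfolding superC_Suc_left by (simp add: field_simps)
qed

lemma superC_0_left: "superC 0 q = real (2 * q choose q)"
  by (simp add: superC_def binomial_fact)

lemma choose_mult_superC: "real ((c + d) choose d) * superC d c = superC 0 c * superC 0 d"
  unfolding superC_0_left superC_def by (simp add: binomial_fact mult_2 add.commute field_simps)

section \<open>A coefficient identity\<close>

lemma coeff_linear_poly_power_all:
  fixes a b :: "'a::comm_semiring_1"
  shows "coeff ([:a, b:] ^ n) i = of_nat (n choose i) * b ^ i * a ^ (n - i)"
proof (cases "i \<le> n")
  case False
  have "degree ([:a, b:] ^ n) \<le> degree [:a, b:] * n"
    by (rule degree_power_le)
  also have "\<dots> \<le> n"
    by simp
  finally have "degree ([:a, b:] ^ n) \<le> n" .
  with False show ?thesis
    by (simp add: coeff_eq_0 binomial_eq_0)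
qed (rule coeff_linear_poly_power)

lemma coeff_power_superC:
  "coeff ([:-1, 1:] ^ (2 * p) * [:1, 1:] ^ (2 * q) :: real poly) (p + q) = (-1) ^ p * superC p q"
proof (induction p arbitrary: q)
  case 0
  then show ?case by (simp add: coeff_linear_poly_power superC_0_left)
next
  case (Suc p)
  define P :: "nat \<Rightarrow> nat \<Rightarrow> real poly" where "P p q = [:-1, 1:] ^ (2 * p) * [:1, 1:] ^ (2 * q)" for p q
  \<comment> \<open>\<open>(x - 1)\<^sup>2 = (x + 1)\<^sup>2 - 4 x\<close> turns the claim into the recurrence of \<^const>\<open>superC\<close>\<close>
  have "[:-1, 1:] ^ 2 = [:1, 1:] ^ 2 - 4 * [:0, 1::real:]"
    by (simp add: power2_eq_square numeral_poly)
  then have "P (Suc p) q = P p (Suc q) - 4 * pCons 0 (P p q)"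
    unfolding P_def by (simp add: power_add algebra_simps)
  then have "coeff (P (Suc p) q) (Suc p + q) = coeff (P p (Suc q)) (p + Suc q) - 4 * coeff (P p q) (p + q)"
    by (simp add: numeral_poly)
  also have "\<dots> = (-1) ^ p * (superC p (Suc q) - 4 * superC p q)"
    using Suc.IH[of q] Suc.IH[of "Suc q"] unfolding P_def by (simp add: algebra_simps)
  also have "\<dots> = (-1) ^ Suc p * superC (Suc p) q"
    using arg_cong[OF superC_Suc_left_add_Suc_right[of p q], of "\<lambda>x. (-1) ^ p * x"]
    by (simp add: algebra_simps)
  finally show ?case unfolding P_def .
qed

lemma coeff_linear_powers_swapped:
  fixes a b :: "'a::comm_semiring_1"
  shows "coeff ([:b, a:] ^ n * [:a, b:] ^ m) m =
    (\<Sum>k\<le>n + m. of_nat (n choose k) * of_nat (m choose k) * a ^ (2 * k) * b ^ (n + m - 2 * k))"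
proof -
  have "coeff ([:b, a:] ^ n * [:a, b:] ^ m) m = (\<Sum>k\<le>m. coeff ([:b, a:] ^ n) k * coeff ([:a, b:] ^ m) (m - k))"
    by (rule coeff_mult)
  also have "\<dots> = (\<Sum>k\<le>m. of_nat (n choose k) * of_nat (m choose k) * a ^ (2 * k) * b ^ (n + m - 2 * k))"
  proof (rule sum.cong[OF refl])
    fix k assume "k \<in> {..m}"
    show "coeff ([:b, a:] ^ n) k * coeff ([:a, b:] ^ m) (m - k)
        = of_nat (n choose k) * of_nat (m choose k) * a ^ (2 * k) * b ^ (n + m - 2 * k)"
    proof (cases "k \<le> n")
      case True
      have "a ^ (2 * k) = a ^ k * a ^ k" "b ^ (n + m - 2 * k) = b ^ (n - k) * b ^ (m - k)"
        using True \<open>k \<in> {..m}\<close> by (simp_all add: power_add[symmetric] mult_2)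
      moreover have "m choose (m - k) = m choose k" "m - (m - k) = k"
        using \<open>k \<in> {..m}\<close> by (simp_all add: binomial_symmetric[symmetric])
      ultimately show ?thesis
        by (simp add: coeff_linear_poly_power_all mult_ac)
    qed (simp add: coeff_linear_poly_power_all binomial_eq_0)
  qed
  also have "\<dots> = (\<Sum>k\<le>n + m. of_nat (n choose k) * of_nat (m choose k) * a ^ (2 * k) * b ^ (n + m - 2 * k))"
    by (rule sum.mono_neutral_left) (auto simp: binomial_eq_0)
  finally show ?thesis .
qed

lemma power_add_mult_power_diff:
  fixes s t :: "'a::comm_ring_1"
  shows "(s + t) ^ n * (s - t) ^ m = (\<Sum>i\<le>n. \<Sum>j\<le>m.
     of_int ((-1) ^ (m - j) * int (n choose i) * int (m choose j)) * s ^ (i + j) * t ^ (n + m - (i + j)))"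
proof -
  have "(s + t) ^ n * (s + (- t)) ^ m
      = (\<Sum>i\<le>n. of_nat (n choose i) * s ^ i * t ^ (n - i)) * (\<Sum>j\<le>m. of_nat (m choose j) * s ^ j * (- t) ^ (m - j))"
    by (simp only: binomial_ring)
  also have "\<dots> = (\<Sum>i\<le>n. \<Sum>j\<le>m.
     of_int ((-1) ^ (m - j) * int (n choose i) * int (m choose j)) * s ^ (i + j) * t ^ (n + m - (i + j)))"
    unfolding sum_product
  proof (intro sum.cong refl)
    fix i j assume "i \<in> {..n}" "j \<in> {..m}"
    then have t_power: "t ^ (n + m - (i + j)) = t ^ (n - i) * t ^ (m - j)"
      by (simp add: power_add[symmetric])
    then show "of_nat (n choose i) * s ^ i * t ^ (n - i) * (of_nat (m choose j) * s ^ j * (- t) ^ (m - j))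
      = of_int ((-1) ^ (m - j) * int (n choose i) * int (m choose j)) * s ^ (i + j) * t ^ (n + m - (i + j))"
      by (simp only: t_power) (simp add: power_minus[of t] power_add mult_ac)
  qed
  finally show ?thesis by simp
qed

definition lift_poly :: "'a::zero poly \<Rightarrow> 'a poly poly" where
  "lift_poly p = map_poly (\<lambda>c. [:c:]) p"

lemma coeff_lift_poly: "coeff (lift_poly p) k = [:coeff p k:]"
  by (simp add: lift_poly_def coeff_map_poly)

lemma lift_poly_mult: "lift_poly (p * q) = lift_poly p * lift_poly (q :: 'a::comm_semiring_1 poly)"
proof -
  have const_sum: "[:sum f A:] = (\<Sum>x\<in>A. [:f x:])" for f :: "nat \<Rightarrow> 'a" and A
    by (rule poly_eqI) (simp add: coeff_sum coeff_pCons split: nat.split)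
  show ?thesis
    by (rule poly_eqI) (simp add: coeff_lift_poly coeff_mult const_sum mult.commute)
qed

lemma lift_poly_power: "lift_poly (p ^ k) = lift_poly (p :: 'a::comm_semiring_1 poly) ^ k"
  by (induction k) (simp_all add: lift_poly_mult, simp add: lift_poly_def)

lemma coeff_coeff_linear_powers:
  fixes n m M r :: nat
  defines "A \<equiv> [:[:1, 1:], [:-1, 1:]:] :: 'a::comm_ring_1 poly poly"
    and "B \<equiv> [:[:-1, 1:], [:1, 1:]:] :: 'a poly poly"
  shows "coeff (coeff (A ^ n * B ^ m) r) M
       = coeff ([:1, 1:] ^ M * [:1, -1:] ^ (n + m - M) :: 'a poly) r * coeff ([:1, 1:] ^ n * [:-1, 1:] ^ m :: 'a poly) M"
proof -
  \<comment> \<open>With \<open>x\<close> the inner and \<open>y\<close> the outer variable, \<open>A = (1 + y) x + (1 - y)\<close> and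
    \<open>B = (1 + y) x - (1 - y)\<close>; expanding \<open>(s + t)\<^sup>n (s - t)\<^sup>m\<close> with \<open>s = (1 + y) x\<close> separates
    the variables.\<close>
  define c where "c i j = (-1) ^ (m - j) * int (n choose i) * int (m choose j)" for i j
  define q :: "nat \<Rightarrow> 'a poly" where "q k = [:1, 1:] ^ k * [:1, -1:] ^ (n + m - k)" for k
  define x :: "'a poly" where "x = [:0, 1:]"
  have x_power: "x ^ k = monom 1 k" for k
    by (simp add: x_def monom_altdef)
  have "A = [:x:] * lift_poly [:1, 1:] + lift_poly [:1, -1:]"
       "B = [:x:] * lift_poly [:1, 1:] - lift_poly [:1, -1:]"
    by (simp_all add: A_def B_def x_def lift_poly_def map_poly_pCons one_pCons)
  then have "A ^ n * B ^ m = (\<Sum>i\<le>n. \<Sum>j\<le>m.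
      of_int (c i j) * ([:x:] * lift_poly [:1, 1:]) ^ (i + j) * lift_poly [:1, -1:] ^ (n + m - (i + j)))"
    unfolding c_def by (simp only: power_add_mult_power_diff)
  also have "\<dots> = (\<Sum>i\<le>n. \<Sum>j\<le>m. smult (of_int (c i j) * x ^ (i + j)) (lift_poly (q (i + j))))"
    by (simp add: q_def lift_poly_mult lift_poly_power smult_power of_int_poly)
  finally have "coeff (coeff (A ^ n * B ^ m) r) M
      = (\<Sum>i\<le>n. \<Sum>j\<le>m. of_int (c i j) * (if i + j = M then 1 else 0)) * coeff (q M) r"
    by (simp add: coeff_sum coeff_lift_poly x_power of_int_poly sum_distrib_right)
      (intro sum.cong refl, simp)
  also have "(\<Sum>i\<le>n. \<Sum>j\<le>m. of_int (c i j) * (if i + j = M then 1 else 0)) = coeff ([:1, 1:] ^ n * [:-1, 1:] ^ m :: 'a poly) M"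
  proof -
    have "[:1, 1:] = x + 1" "[:-1, 1:] = x - 1"
      by (simp_all add: x_def one_pCons)
    then show ?thesis
      by (simp add: power_add_mult_power_diff c_def coeff_sum x_power of_int_poly)
  qed
  finally show ?thesis
    unfolding q_def by (simp add: mult.commute)
qed

lemma coeff_one_minus_square_power:
  "coeff ([:1, 1:] ^ M * [:1, -1:] ^ M :: 'a::comm_ring_1 poly) r
     = (if even r then (-1) ^ (r div 2) * of_nat (M choose (r div 2)) else 0)"
proof -
  have "[:1, 1:] ^ M * [:1, -1:] ^ M = (monom (-1) 2 + 1 :: 'a poly) ^ M"
    by (simp add: power_mult_distrib[symmetric] monom_altdef one_pCons power2_eq_square)
  also have "\<dots> = (\<Sum>j\<le>M. of_nat (M choose j) * monom (-1) 2 ^ j)"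
    by (simp add: binomial_ring)
  finally have "coeff ([:1, 1:] ^ M * [:1, -1:] ^ M :: 'a poly) r
      = (\<Sum>j\<le>M. if r = 2 * j then (-1) ^ j * of_nat (M choose j) else 0)"
    by (simp add: coeff_sum monom_power of_nat_poly) (intro sum.cong refl, simp)
  also have "\<dots> = (if even r then (-1) ^ (r div 2) * of_nat (M choose (r div 2)) else 0)"
    by (cases "even r") (auto simp: sum.delta' binomial_eq_0 elim!: evenE intro!: sum.neutral)
  finally show ?thesis .
qed

definition signed_superC :: "nat \<Rightarrow> nat \<Rightarrow> real" where
  "signed_superC M k = (-1) ^ k * superC k (M - k)"

lemma sum_choose_mult_signed_superC:
  assumes "n + m = 2 * M"
  shows "(\<Sum>k\<le>n + m. real (n choose k) * real (m choose k) * signed_superC M k)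
       = (if even n then superC 0 (n div 2) * superC 0 (m div 2) else 0)"
proof -
  define a b :: "real poly" where "a = [:-1, 1:]" and "b = [:1, 1:]"
  have "(\<Sum>k\<le>n + m. real (n choose k) * real (m choose k) * signed_superC M k)
      = coeff (\<Sum>k\<le>n + m. of_nat (n choose k) * of_nat (m choose k) * a ^ (2 * k) * b ^ (n + m - 2 * k)) M"
    unfolding coeff_sum
  proof (intro sum.cong refl)
    fix k
    show "real (n choose k) * real (m choose k) * signed_superC M k
        = coeff (of_nat (n choose k) * of_nat (m choose k) * a ^ (2 * k) * b ^ (n + m - 2 * k)) M"
    proof (cases "k \<le> n \<and> k \<le> m")
      case True
      with assms have "n + m - 2 * k = 2 * (M - k)" "M = k + (M - k)"
        by auto
      then have "coeff (a ^ (2 * k) * b ^ (n + m - 2 * k)) M = signed_superC M k"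
        unfolding a_def b_def signed_superC_def by (metis coeff_power_superC)
      then show ?thesis
        by (simp add: of_nat_poly mult.assoc)
    qed (auto simp: binomial_eq_0)
  qed
  also have "\<dots> = coeff (coeff ([:[:1, 1:], [:-1, 1:]:] ^ n * [:[:-1, 1:], [:1, 1:]:] ^ m) m) M"
    by (simp only: coeff_linear_powers_swapped a_def b_def)
  also have "\<dots> = coeff ([:1, 1:] ^ M * [:1, -1:] ^ M :: real poly) m * coeff ([:1, 1:] ^ n * [:-1, 1:] ^ m :: real poly) M"
    using coeff_coeff_linear_powers[of n m m M] assms by simp
  also have "\<dots> = (if even n then superC 0 (n div 2) * superC 0 (m div 2) else 0)"
  proof (cases "even n")
    case True
    with assms obtain c d where n: "n = 2 * c" and m: "m = 2 * d"
      by (metis dvd_add_right_iff dvd_triv_left evenE)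
    with assms have M: "M = c + d"
      by simp
    have "coeff ([:1, 1:] ^ n * [:-1, 1:] ^ m :: real poly) M = (-1) ^ d * superC d c"
      using coeff_power_superC[of d c] unfolding n m M by (simp add: mult.commute add.commute)
    then show ?thesis
      using choose_mult_superC[of c d] unfolding coeff_one_minus_square_power n m M
      by (simp add: mult_ac)
  next
    case False
    with assms have "odd m"
      by presburger
    with False show ?thesis
      by (simp add: coeff_one_minus_square_power)
  qed
  finally show ?thesis .
qed

section \<open>Binary words by number of descents\<close>

fun descents :: "bool list \<Rightarrow> nat" where
  "descents (x # y # w) = (if x \<and> \<not> y then 1 else 0) + descents (y # w)"
| "descents _ = 0"

lemma descents_False_Cons [simp]: "descents (False # w) = descents w"
  by (cases w) auto

lemma descents_replicate [simp]: "descents (replicate k b) = 0"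
proof -
  have "descents (b # replicate k b) = 0"
    by (induction k) auto
  then show ?thesis
    by (cases k) auto
qed

lemma twice_descents_le_length: "2 * descents w \<le> length w"
proof (induction w rule: length_induct)
  case (1 w)
  show ?case
  proof (cases w rule: descents.cases)
    case (1 x y v)
    then show ?thesis
      using "1.IH"[rule_format, of v] "1.IH"[rule_format, of "y # v"] by auto
  qed auto
qed

lemma descents_conv_card: "descents w = card {k. Suc k < length w \<and> w ! k \<and> \<not> w ! Suc k}"
proof (induction w rule: descents.induct)
  case (1 x y w)
  let ?D = "\<lambda>v. {k. Suc k < length v \<and> v ! k \<and> \<not> v ! Suc k}"
  have "?D (x # y # w) = (if x \<and> \<not> y then {0} else {}) \<union> Suc ` ?D (y # w)"
  proof (rule set_eqI)
    fix k
    show "k \<in> ?D (x # y # w) \<longleftrightarrow> k \<in> (if x \<and> \<not> y then {0} else {}) \<union> Suc ` ?D (y # w)"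
      by (cases k) (auto simp: image_iff)
  qed
  then have "card (?D (x # y # w)) = (if x \<and> \<not> y then 1 else 0) + card (?D (y # w))"
    by (simp add: card_image)
  with "1.IH" show ?case
    by simp
qed auto

definition bool_words :: "nat \<Rightarrow> nat \<Rightarrow> bool list set" where
  "bool_words n m = {w. length (filter Not w) = n \<and> length (filter (\<lambda>b. b) w) = m}"

lemma length_bool_words: "w \<in> bool_words n m \<Longrightarrow> length w = n + m"
  using sum_length_filter_compl[of "\<lambda>b. b" w] by (simp add: bool_words_def)

lemma finite_bool_words: "finite (bool_words n m)"
proof (rule finite_subset)
  show "bool_words n m \<subseteq> {w. set w \<subseteq> UNIV \<and> length w = n + m}"
    using length_bool_words by blast
qed (rule finite_lists_length_eq, simp)

lemma Nil_in_bool_words_iff: "[] \<in> bool_words n m \<longleftrightarrow> n = 0 \<and> m = 0"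
  by (auto simp: bool_words_def)

lemma Cons_in_bool_words_iff:
  "x # w \<in> bool_words n m \<longleftrightarrow> (if x then 0 < m \<and> w \<in> bool_words n (m - 1) else 0 < n \<and> w \<in> bool_words (n - 1) m)"
  by (auto simp: bool_words_def)

lemma bool_words_0_right: "bool_words n 0 = {replicate n False}"
  by (auto simp: bool_words_def filter_empty_conv replicate_length_filter intro: replicate_eqI)

lemma bool_words_0_left: "bool_words 0 m = {replicate m True}"
  by (auto simp: bool_words_def filter_empty_conv intro: replicate_eqI)

lemma bool_words_Suc_Suc:
  "bool_words (Suc n) (Suc m) = (#) False ` bool_words n (Suc m) \<union> (#) True ` bool_words (Suc n) m"
proof (rule set_eqI)
  fix w
  show "w \<in> bool_words (Suc n) (Suc m) \<longleftrightarrow> w \<in> (#) False ` bool_words n (Suc m) \<union> (#) True ` bool_words (Suc n) m"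
    by (cases w) (auto simp: Nil_in_bool_words_iff Cons_in_bool_words_iff)
qed

lemma sum_bool_words_Suc_Suc:
  "(\<Sum>w\<in>bool_words (Suc n) (Suc m). h w)
     = (\<Sum>w\<in>bool_words n (Suc m). h (False # w)) + (\<Sum>w\<in>bool_words (Suc n) m. h (True # w))"
  unfolding bool_words_Suc_Suc
  by (subst sum.union_disjoint) (auto simp: finite_bool_words sum.reindex)

lemma sum_bool_words_True_Cons:
  "(\<Sum>w\<in>bool_words (Suc n) m. f (descents (True # w))) = (\<Sum>i\<le>m. \<Sum>w\<in>bool_words n i. f (Suc (descents w)))"
proof (induction m)
  case 0
  then show ?case
    by (simp add: bool_words_0_right)
next
  case (Suc m)
  then show ?case
    by (simp add: sum_bool_words_Suc_Suc add.commute)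
qed

lemma sum_bool_words_descents:
  fixes f :: "nat \<Rightarrow> 'a::comm_semiring_1"
  assumes "n \<le> K"
  shows "(\<Sum>w\<in>bool_words n m. f (descents w)) = (\<Sum>k\<le>K. of_nat (n choose k) * of_nat (m choose k) * f k)"
  using assms
proof (induction n arbitrary: m K f)
  case 0
  then show ?case
    by (simp add: bool_words_0_left binomial_eq_0 sum.atMost_shift)
next
  case (Suc n)
  show ?case
  proof (cases m)
    case 0
    then show ?thesis
      by (simp add: bool_words_0_right binomial_eq_0 sum.atMost_shift)
  next
    case (Suc m')
    from Suc.prems obtain K' where K: "K = Suc K'" and "n \<le> K'"
      by (cases K) auto
    \<comment> \<open>Pascal's rule in \<open>n\<close>, after the hockey-stick identity for the sum over \<open>i\<close>\<close>
    define c where "c k = of_nat (n choose k) * of_nat (m choose k) * f k" for k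
    define d where "d k = of_nat (n choose k) * of_nat (m choose Suc k) * f (Suc k)" for k
    have IH: "(\<Sum>w\<in>bool_words n i. g (descents w)) = (\<Sum>k\<le>K. of_nat (n choose k) * of_nat (i choose k) * g k)"
      for i and g :: "nat \<Rightarrow> 'a"
      using Suc.IH[where K = K and m = i and f = g] Suc.prems by simp
    have "(\<Sum>w\<in>bool_words (Suc n) m. f (descents w))
        = (\<Sum>w\<in>bool_words n m. f (descents w)) + (\<Sum>i\<le>m'. \<Sum>w\<in>bool_words n i. f (Suc (descents w)))"
      unfolding Suc sum_bool_words_Suc_Suc sum_bool_words_True_Cons by simp
    also have "\<dots> = (\<Sum>k\<le>K. c k) + (\<Sum>i\<le>m'. \<Sum>k\<le>K. of_nat (n choose k) * of_nat (i choose k) * f (Suc k))"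
      unfolding c_def IH[of f m] IH[of "\<lambda>k. f (Suc k)"] ..
    also have "(\<Sum>i\<le>m'. \<Sum>k\<le>K. of_nat (n choose k) * of_nat (i choose k) * f (Suc k))
        = (\<Sum>k\<le>K. of_nat (n choose k) * of_nat (\<Sum>i\<le>m'. i choose k) * f (Suc k))"
      by (subst sum.swap) (simp add: sum_distrib_left sum_distrib_right)
    also have "\<dots> = (\<Sum>k\<le>K. d k)"
      unfolding d_def Suc sum_choose_upper ..
    also have "(\<Sum>k\<le>K. c k) = c 0 + (\<Sum>k\<le>K'. c (Suc k))"
      unfolding K by (rule sum.atMost_Suc_shift)
    also have "(\<Sum>k\<le>K. d k) = (\<Sum>k\<le>K'. d k)"
      using \<open>n \<le> K'\<close> by (simp add: K d_def binomial_eq_0)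
    also have "c 0 + (\<Sum>k\<le>K'. c (Suc k)) + (\<Sum>k\<le>K'. d k) = c 0 + (\<Sum>k\<le>K'. c (Suc k) + d k)"
      by (simp add: sum.distrib add.assoc)
    also have "\<dots> = (\<Sum>k\<le>K. of_nat (Suc n choose k) * of_nat (m choose k) * f k)"
      unfolding K sum.atMost_Suc_shift by (simp add: c_def d_def algebra_simps)
    finally show ?thesis .
  qed
qed

section \<open>Shuffles as binary words\<close>

lemma length_filter_take_le: "length (filter P (take i w)) \<le> length (filter P w)"
  by (metis append_take_drop_id filter_append length_append le_add1)

lemma length_filter_take_less:
  assumes "i < j" "j \<le> length w" "P (w ! (j - 1))"
  shows "length (filter P (take i w)) < length (filter P (take j w))"
proof -
  have "take i (take (j - 1) w) = take i w"
    using \<open>i < j\<close> by (simp add: min_absorb1)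
  then have "length (filter P (take i w)) \<le> length (filter P (take (j - 1) w))"
    by (metis length_filter_take_le)
  moreover have "take j w = take (j - 1) w @ [w ! (j - 1)]"
    using assms take_Suc_conv_app_nth[of "j - 1" w] by simp
  ultimately show ?thesis
    using assms(3) by simp
qed

lemma length_filter_take_map_upt:
  assumes "i \<le> N"
  shows "length (filter P (take i (map f [1..<Suc N]))) = card {j \<in> {1..i}. P (f j)}"
proof -
  have "take i (map f [1..<Suc N]) = map f [1..<Suc i]"
    using assms by (simp add: take_map take_upt min_def del: upt_Suc)
  also have "length (filter P \<dots>) = card ({j. P (f j)} \<inter> set [1..<Suc i])"
    by (simp add: filter_map distinct_length_filter comp_def del: upt_Suc)
  also have "{j. P (f j)} \<inter> set [1..<Suc i] = {j \<in> {1..i}. P (f j)}"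
    by auto
  finally show ?thesis .
qed

lemma shuffleS_permutes: "\<sigma> \<in> shuffleS n m \<Longrightarrow> \<sigma> permutes {1..n + m}"
  by (simp add: shuffleS_def)

lemma shuffleS_less:
  assumes \<sigma>: "\<sigma> \<in> shuffleS n m" and "p \<in> {1..n + m}" "q \<in> {1..n + m}" "p < q"
    and same_block: "n < \<sigma> p \<longleftrightarrow> n < \<sigma> q"
  shows "\<sigma> p < \<sigma> q"
proof (rule ccontr)
  assume "\<not> \<sigma> p < \<sigma> q"
  have perm: "\<sigma> permutes {1..n + m}"
    using \<sigma> by (rule shuffleS_permutes)
  then have "\<sigma> p \<noteq> \<sigma> q"
    using \<open>p < q\<close> by (metis permutes_inj inj_eq less_irrefl)
  with \<open>\<not> \<sigma> p < \<sigma> q\<close> have "\<sigma> q < \<sigma> p"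
    by simp
  moreover have "\<sigma> p \<in> {1..n + m}" "\<sigma> q \<in> {1..n + m}"
    using assms(2,3) permutes_in_image[OF perm] by blast+
  ultimately have "inv \<sigma> (\<sigma> q) < inv \<sigma> (\<sigma> p)"
    using \<sigma> same_block unfolding shuffleS_def by (cases "n < \<sigma> p") auto
  then show False
    using \<open>p < q\<close> permutes_inverses(2)[OF perm] by simp
qed

lemma shuffleS_card_prefix:
  assumes \<sigma>: "\<sigma> \<in> shuffleS n m" and i: "i \<in> {1..n + m}"
  shows "card {j \<in> {1..i}. n < \<sigma> j \<longleftrightarrow> n < \<sigma> i} = (if n < \<sigma> i then \<sigma> i - n else \<sigma> i)"
proof -
  have perm: "\<sigma> permutes {1..n + m}"
    using \<sigma> by (rule shuffleS_permutes)
  have \<sigma>_range: "\<sigma> j \<in> {1..n + m} \<longleftrightarrow> j \<in> {1..n + m}" for j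
    by (rule permutes_in_image[OF perm])
  have image: "\<sigma> ` {j \<in> {1..i}. n < \<sigma> j \<longleftrightarrow> n < \<sigma> i} = {v \<in> {1..\<sigma> i}. n < v \<longleftrightarrow> n < \<sigma> i}"
  proof (intro equalityI subsetI)
    fix v assume "v \<in> \<sigma> ` {j \<in> {1..i}. n < \<sigma> j \<longleftrightarrow> n < \<sigma> i}"
    then obtain j where j: "j \<in> {1..i}" "n < \<sigma> j \<longleftrightarrow> n < \<sigma> i" and v: "v = \<sigma> j"
      by blast
    then have "\<sigma> j \<le> \<sigma> i"
      using shuffleS_less[OF \<sigma>, of j i] i by (cases "j = i") auto
    then show "v \<in> {v \<in> {1..\<sigma> i}. n < v \<longleftrightarrow> n < \<sigma> i}"
      using j v i \<sigma>_range[of j] by auto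
  next
    fix v assume v: "v \<in> {v \<in> {1..\<sigma> i}. n < v \<longleftrightarrow> n < \<sigma> i}"
    define j where "j = inv \<sigma> v"
    have "\<sigma> i \<in> {1..n + m}"
      using i \<sigma>_range by blast
    with v have "\<sigma> j = v" "j \<in> {1..n + m}"
      using permutes_inverses(1)[OF perm] \<sigma>_range[of j] by (auto simp: j_def)
    moreover have "j \<le> i"
    proof (rule ccontr)
      assume "\<not> j \<le> i"
      then have "\<sigma> i < \<sigma> j"
        using shuffleS_less[OF \<sigma> i \<open>j \<in> {1..n + m}\<close>] v \<open>\<sigma> j = v\<close> by auto
      then show False
        using v \<open>\<sigma> j = v\<close> by auto
    qed
    ultimately show "v \<in> \<sigma> ` {j \<in> {1..i}. n < \<sigma> j \<longleftrightarrow> n < \<sigma> i}"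
      using v by (auto intro!: image_eqI[of v \<sigma> j])
  qed
  have "card {j \<in> {1..i}. n < \<sigma> j \<longleftrightarrow> n < \<sigma> i} = card {v \<in> {1..\<sigma> i}. n < v \<longleftrightarrow> n < \<sigma> i}"
    unfolding image[symmetric] by (rule card_image[symmetric], rule permutes_inj_on[OF perm])
  also have "\<dots> = (if n < \<sigma> i then \<sigma> i - n else \<sigma> i)"
  proof (cases "n < \<sigma> i")
    case True
    then have "{v \<in> {1..\<sigma> i}. n < v \<longleftrightarrow> n < \<sigma> i} = {n<..\<sigma> i}"
      by auto
    with True show ?thesis by simp
  next
    case False
    then have "{v \<in> {1..\<sigma> i}. n < v \<longleftrightarrow> n < \<sigma> i} = {1..\<sigma> i}"
      by auto
    with False show ?thesis by simp
  qed
  finally show ?thesis .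
qed

lemma shuffleS_card_upper_block:
  assumes "\<sigma> \<in> shuffleS n m"
  shows "card {j \<in> {1..n + m}. n < \<sigma> j} = m"
proof -
  have perm: "\<sigma> permutes {1..n + m}"
    using assms by (rule shuffleS_permutes)
  have "\<sigma> ` {j \<in> {1..n + m}. n < \<sigma> j} = {v \<in> \<sigma> ` {1..n + m}. n < v}"
    by blast
  also have "\<dots> = {n<..n + m}"
    using permutes_image[OF perm] by auto
  finally have image: "\<sigma> ` {j \<in> {1..n + m}. n < \<sigma> j} = {n<..n + m}" .
  have "card {j \<in> {1..n + m}. n < \<sigma> j} = card {n<..n + m}"
    unfolding image[symmetric] by (rule card_image[symmetric], rule permutes_inj_on[OF perm])
  then show ?thesis
    by simp
qed

definition shuffle_word :: "nat \<Rightarrow> nat \<Rightarrow> (nat \<Rightarrow> nat) \<Rightarrow> bool list" where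
  "shuffle_word n m \<sigma> = map (\<lambda>i. n < \<sigma> i) [1..<Suc (n + m)]"

text \<open>The inverse of \<^const>\<open>shuffle_word\<close>: position \<open>i\<close> is sent to its rank among the positions
  carrying the same letter, shifted by \<open>n\<close> for the letter True.\<close>

definition word_shuffle :: "nat \<Rightarrow> bool list \<Rightarrow> nat \<Rightarrow> nat" where
  "word_shuffle n w i = (if i \<in> {1..length w}
     then (if w ! (i - 1) then n else 0) + length (filter (\<lambda>b. b = w ! (i - 1)) (take i w)) else i)"

lemma length_shuffle_word [simp]: "length (shuffle_word n m \<sigma>) = n + m"
  by (simp add: shuffle_word_def del: upt_Suc)

lemma nth_shuffle_word: "k < n + m \<Longrightarrow> shuffle_word n m \<sigma> ! k \<longleftrightarrow> n < \<sigma> (Suc k)"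
  by (simp add: shuffle_word_def del: upt_Suc)

lemma word_shuffle_shuffle_word:
  assumes \<sigma>: "\<sigma> \<in> shuffleS n m"
  shows "word_shuffle n (shuffle_word n m \<sigma>) = \<sigma>"
proof
  fix i
  show "word_shuffle n (shuffle_word n m \<sigma>) i = \<sigma> i"
  proof (cases "i \<in> {1..n + m}")
    case True
    then have "length (filter (\<lambda>b. b = (n < \<sigma> i)) (take i (shuffle_word n m \<sigma>)))
        = card {j \<in> {1..i}. n < \<sigma> j \<longleftrightarrow> n < \<sigma> i}"
      unfolding shuffle_word_def by (subst length_filter_take_map_upt) auto
    moreover have "shuffle_word n m \<sigma> ! (i - 1) \<longleftrightarrow> n < \<sigma> i"
      using True nth_shuffle_word[of "i - 1" n m \<sigma>] by auto
    ultimately show ?thesis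
      using True shuffleS_card_prefix[OF \<sigma> True] by (auto simp: word_shuffle_def)
  next
    case False
    then show ?thesis
      using permutes_not_in[OF shuffleS_permutes[OF \<sigma>]] by (auto simp: word_shuffle_def)
  qed
qed

lemma shuffle_word_in_bool_words:
  assumes \<sigma>: "\<sigma> \<in> shuffleS n m"
  shows "shuffle_word n m \<sigma> \<in> bool_words n m"
proof -
  have "length (filter (\<lambda>b. b) (take (n + m) (shuffle_word n m \<sigma>))) = card {j \<in> {1..n + m}. n < \<sigma> j}"
    unfolding shuffle_word_def by (subst length_filter_take_map_upt) auto
  then have "length (filter (\<lambda>b. b) (shuffle_word n m \<sigma>)) = m"
    using shuffleS_card_upper_block[OF \<sigma>] by simp
  moreover from this have "length (filter Not (shuffle_word n m \<sigma>)) = n"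
    using sum_length_filter_compl[of "\<lambda>b. b" "shuffle_word n m \<sigma>"] by simp
  ultimately show ?thesis
    by (simp add: bool_words_def)
qed

context
  fixes n m :: nat and w :: "bool list"
  assumes w: "w \<in> bool_words n m"
begin

lemma word_shuffle_block:
  assumes i: "i \<in> {1..n + m}"
  shows "word_shuffle n w i \<in> (if w ! (i - 1) then {n<..n + m} else {1..n})"
proof -
  let ?c = "length (filter (\<lambda>b. b = w ! (i - 1)) (take i w))"
  have "0 < ?c"
    using length_filter_take_less[of 0 i w] i length_bool_words[OF w] by simp
  moreover have "?c \<le> (if w ! (i - 1) then m else n)"
    using length_filter_take_le[of "\<lambda>b. b = w ! (i - 1)" i w] w
    by (cases "w ! (i - 1)") (simp_all add: bool_words_def)
  ultimately show ?thesis
    using i length_bool_words[OF w] by (cases "w ! (i - 1)") (auto simp: word_shuffle_def Suc_le_eq)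
qed

lemma word_shuffle_upper_iff:
  "i \<in> {1..n + m} \<Longrightarrow> n < word_shuffle n w i \<longleftrightarrow> w ! (i - 1)"
  using word_shuffle_block[of i] by (auto split: if_splits)

lemma word_shuffle_less:
  assumes "i \<in> {1..n + m}" "j \<in> {1..n + m}" "i < j" "w ! (i - 1) = w ! (j - 1)"
  shows "word_shuffle n w i < word_shuffle n w j"
  using assms length_filter_take_less[of i j w "\<lambda>b. b = w ! (j - 1)"] length_bool_words[OF w]
  by (simp add: word_shuffle_def)

lemma word_shuffle_permutes: "word_shuffle n w permutes {1..n + m}"
proof (rule bij_imp_permutes)
  have inj: "inj_on (word_shuffle n w) {1..n + m}"
  proof (rule inj_onI, rule ccontr)
    fix i j assume "i \<in> {1..n + m}" "j \<in> {1..n + m}" "word_shuffle n w i = word_shuffle n w j" "i \<noteq> j"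
    then show False
      using word_shuffle_less[of i j] word_shuffle_less[of j i] word_shuffle_upper_iff[of i] word_shuffle_upper_iff[of j]
      by (metis linorder_neqE_nat less_irrefl)
  qed
  moreover have "word_shuffle n w ` {1..n + m} \<subseteq> {1..n + m}"
    using word_shuffle_block by (fastforce split: if_splits)
  ultimately show "bij_betw (word_shuffle n w) {1..n + m} {1..n + m}"
    by (simp add: bij_betw_def endo_inj_surj)
next
  fix i assume "i \<notin> {1..n + m}"
  then show "word_shuffle n w i = i"
    using length_bool_words[OF w] by (auto simp: word_shuffle_def)
qed

lemma word_shuffle_in_shuffleS: "word_shuffle n w \<in> shuffleS n m"
proof -
  let ?\<tau> = "inv (word_shuffle n w)"
  have perm: "word_shuffle n w permutes {1..n + m}"
    by (rule word_shuffle_permutes)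
  have inv_less: "?\<tau> a < ?\<tau> b"
    if "a \<in> {1..n + m}" "b \<in> {1..n + m}" "a < b" "n < a \<longleftrightarrow> n < b" for a b
  proof (rule ccontr)
    assume "\<not> ?\<tau> a < ?\<tau> b"
    moreover have "?\<tau> a \<noteq> ?\<tau> b"
      using that(3) permutes_inverses(1)[OF perm, of a] permutes_inverses(1)[OF perm, of b] by auto
    moreover have "?\<tau> a \<in> {1..n + m}" "?\<tau> b \<in> {1..n + m}"
      using that permutes_in_image[OF permutes_inv[OF perm]] by blast+
    ultimately have "word_shuffle n w (?\<tau> b) < word_shuffle n w (?\<tau> a)"
      using that word_shuffle_less word_shuffle_upper_iff permutes_inverses(1)[OF perm] by (metis linorder_neqE_nat)
    then show False
      using that permutes_inverses(1)[OF perm] by simp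
  qed
  show ?thesis
    unfolding shuffleS_def using perm by (auto intro!: inv_less)
qed

lemma shuffle_word_word_shuffle: "shuffle_word n m (word_shuffle n w) = w"
proof (rule nth_equalityI)
  show "length (shuffle_word n m (word_shuffle n w)) = length w"
    using length_bool_words[OF w] by simp
  fix k assume "k < length (shuffle_word n m (word_shuffle n w))"
  then show "shuffle_word n m (word_shuffle n w) ! k = w ! k"
    using word_shuffle_upper_iff[of "Suc k"] by (simp add: nth_shuffle_word)
qed

end

lemma bij_betw_shuffle_word: "bij_betw (shuffle_word n m) (shuffleS n m) (bool_words n m)"
  by (rule bij_betw_byWitness[where f' = "word_shuffle n"])
    (auto simp: word_shuffle_shuffle_word shuffle_word_in_bool_words shuffle_word_word_shuffle word_shuffle_in_shuffleS)

lemma shuffleS_peak_iff: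
  assumes \<sigma>: "\<sigma> \<in> shuffleS n m" and i: "i \<in> {1..n + m - 1}"
  shows "ext0 \<sigma> (i - 1) < ext0 \<sigma> i \<and> ext0 \<sigma> i > ext0 \<sigma> (i + 1) \<longleftrightarrow> n < \<sigma> i \<and> \<not> n < \<sigma> (Suc i)"
proof -
  have i_range: "i \<in> {1..n + m}" "Suc i \<in> {1..n + m}"
    using i by auto
  have ext0_i: "ext0 \<sigma> i = \<sigma> i" "ext0 \<sigma> (i + 1) = \<sigma> (Suc i)"
    using i by (auto simp: ext0_def)
  have descent_iff: "\<sigma> (Suc i) < \<sigma> i \<longleftrightarrow> n < \<sigma> i \<and> \<not> n < \<sigma> (Suc i)"
    using shuffleS_less[OF \<sigma> i_range lessI] by (cases "n < \<sigma> i"; cases "n < \<sigma> (Suc i)") auto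
  have "ext0 \<sigma> (i - 1) < \<sigma> i" if "n < \<sigma> i"
  proof (cases "i = 1")
    case False
    then have "i - 1 \<in> {1..n + m}" "ext0 \<sigma> (i - 1) = \<sigma> (i - 1)"
      using i by (auto simp: ext0_def)
    then show ?thesis
      using shuffleS_less[OF \<sigma> \<open>i - 1 \<in> {1..n + m}\<close> i_range(1)] that i by (cases "n < \<sigma> (i - 1)") auto
  qed (use that in \<open>simp add: ext0_def\<close>)
  then show ?thesis
    unfolding ext0_i using descent_iff by auto
qed

lemma card_peaks_shuffleS:
  assumes \<sigma>: "\<sigma> \<in> shuffleS n m"
  shows "card {i \<in> {Suc d..n + m - 1}. ext0 \<sigma> (i - 1) < ext0 \<sigma> i \<and> ext0 \<sigma> i > ext0 \<sigma> (i + 1)}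
       = descents (drop d (shuffle_word n m \<sigma>))"
proof -
  let ?w = "drop d (shuffle_word n m \<sigma>)"
  have "{i \<in> {Suc d..n + m - 1}. ext0 \<sigma> (i - 1) < ext0 \<sigma> i \<and> ext0 \<sigma> i > ext0 \<sigma> (i + 1)}
      = {i \<in> {Suc d..n + m - 1}. n < \<sigma> i \<and> \<not> n < \<sigma> (Suc i)}"
  proof (rule Collect_cong)
    fix i
    show "i \<in> {Suc d..n + m - 1} \<and> ext0 \<sigma> (i - 1) < ext0 \<sigma> i \<and> ext0 \<sigma> i > ext0 \<sigma> (i + 1)
        \<longleftrightarrow> i \<in> {Suc d..n + m - 1} \<and> n < \<sigma> i \<and> \<not> n < \<sigma> (Suc i)"
      using shuffleS_peak_iff[OF \<sigma>, of i] by auto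
  qed
  also have "\<dots> = (\<lambda>k. Suc (d + k)) ` {k. Suc k < length ?w \<and> ?w ! k \<and> \<not> ?w ! Suc k}"
  proof (intro equalityI subsetI)
    fix i assume "i \<in> {i \<in> {Suc d..n + m - 1}. n < \<sigma> i \<and> \<not> n < \<sigma> (Suc i)}"
    then show "i \<in> (\<lambda>k. Suc (d + k)) ` {k. Suc k < length ?w \<and> ?w ! k \<and> \<not> ?w ! Suc k}"
      using nth_shuffle_word[of "i - 1" n m \<sigma>] nth_shuffle_word[of i n m \<sigma>]
      by (intro image_eqI[of i _ "i - Suc d"]) auto
  qed (auto simp: nth_shuffle_word)
  finally show ?thesis
    by (simp add: card_image inj_on_def descents_conv_card)
qed

lemma pplus_eq_descents: "\<sigma> \<in> shuffleS n m \<Longrightarrow> pplus (n + m) \<sigma> = descents (shuffle_word n m \<sigma>)"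
  using card_peaks_shuffleS[of \<sigma> n m 0] by (simp add: pplus_def)

lemma pminus_eq_descents: "\<sigma> \<in> shuffleS n m \<Longrightarrow> pminus (n + m) \<sigma> = descents (tl (shuffle_word n m \<sigma>))"
  using card_peaks_shuffleS[of \<sigma> n m 1] by (simp add: pminus_def drop_Suc numeral_2_eq_2)

lemma sum_shuffleS_pplus:
  "(\<Sum>\<sigma>\<in>shuffleS n m. f (pplus (n + m) \<sigma>)) = (\<Sum>w\<in>bool_words n m. f (descents w))"
  by (simp add: pplus_eq_descents sum.reindex_bij_betw[OF bij_betw_shuffle_word, symmetric])

lemma sum_shuffleS_pminus:
  "(\<Sum>\<sigma>\<in>shuffleS n m. f (pminus (n + m) \<sigma>)) = (\<Sum>w\<in>bool_words n m. f (descents (tl w)))"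
  by (simp add: pminus_eq_descents sum.reindex_bij_betw[OF bij_betw_shuffle_word, symmetric])

section \<open>Peak sums\<close>

lemma sum_bool_words_signed_superC:
  assumes "n + m = 2 * M"
  shows "(\<Sum>w\<in>bool_words n m. signed_superC M (descents w))
       = (if even n then superC 0 (n div 2) * superC 0 (m div 2) else 0)"
  using sum_bool_words_descents[where K = "n + m" and m = m and f = "signed_superC M"] sum_choose_mult_signed_superC[OF assms]
  by simp

lemma signed_superC_diff:
  assumes "k < M"
  shows "signed_superC M k - signed_superC M (Suc k) = 4 * signed_superC (M - 1) k"
proof -
  obtain j where "M - k = Suc j" "M - Suc k = j" "M - 1 - k = j"
    using assms by (metis Suc_diff_Suc diff_Suc_eq_diff_pred)
  then show ?thesis
    using arg_cong[OF superC_Suc_left_add_Suc_right[of k j], of "\<lambda>x. (-1) ^ k * x"]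
    by (simp add: signed_superC_def algebra_simps)
qed

lemma sum_bool_words_descents_tl:
  "(\<Sum>w\<in>bool_words (Suc n) (Suc m). f (descents (tl w)))
     = (\<Sum>w\<in>bool_words n (Suc m). f (descents w)) + (\<Sum>w\<in>bool_words (Suc n) m. f (descents w))"
  by (simp add: sum_bool_words_Suc_Suc)

lemma sum_bool_words_descents_eq_True_Cons:
  fixes f :: "nat \<Rightarrow> 'a::ab_group_add"
  shows "(\<Sum>w\<in>bool_words (Suc n) m. f (descents w))
     = (\<Sum>w\<in>bool_words (Suc n) m. f (descents (True # w))) + (\<Sum>w\<in>bool_words n m. f (descents w) - f (Suc (descents w)))"
proof (cases m)
  case 0
  then show ?thesis
    by (simp add: bool_words_0_right)
next
  case (Suc m')
  then show ?thesis
    by (simp add: sum_bool_words_Suc_Suc sum_subtractf)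
qed

lemma sum_bool_words_tl_signed_superC_even:
  assumes "n + m = 2 * M"
  shows "(\<Sum>w\<in>bool_words (Suc n) (Suc m). signed_superC (Suc M) (descents (tl w)))
     = (\<Sum>w\<in>bool_words (Suc n) (Suc m). signed_superC (Suc M) (descents w))
       + 4 * (\<Sum>w\<in>bool_words n m. signed_superC M (descents w))"
proof -
  have "descents w < Suc M" if "w \<in> bool_words n m" for w
    using twice_descents_le_length[of w] length_bool_words[OF that] assms by simp
  then have "(\<Sum>w\<in>bool_words n m. signed_superC (Suc M) (descents w) - signed_superC (Suc M) (Suc (descents w)))
      = 4 * (\<Sum>w\<in>bool_words n m. signed_superC M (descents w))"
    by (simp add: signed_superC_diff sum_distrib_left)
  then show ?thesis
    by (simp add: sum_bool_words_descents_tl sum_bool_words_descents_eq_True_Cons[where n = n and m = m] sum_bool_words_Suc_Suc)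
qed

lemma sum_bool_words_tl_signed_superC:
  "(\<Sum>w\<in>bool_words n m. signed_superC ((n + m) div 2) (descents (tl w)))
     = (if even n \<or> even m then superC 0 (n div 2) * superC 0 (m div 2)
        else 4 * superC 0 (n div 2) * superC 0 (m div 2))"
proof (cases "n = 0 \<or> m = 0")
  case True
  then show ?thesis
    by (auto simp: bool_words_0_left bool_words_0_right signed_superC_def superC_0_left)
next
  case False
  then obtain n' m' where n: "n = Suc n'" and m: "m = Suc m'"
    by (metis not0_implies_Suc)
  show ?thesis
  proof (cases "even (n + m)")
    case True
    define M where "M = (n' + m') div 2"
    have M: "n' + m' = 2 * M" "(n + m) div 2 = Suc M" and "even n' \<longleftrightarrow> even m'"
      using True unfolding n m M_def by presburger+
    then have "(\<Sum>w\<in>bool_words n m. signed_superC ((n + m) div 2) (descents (tl w)))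
        = (if even n then superC 0 (n div 2) * superC 0 (m div 2) else 0)
          + 4 * (if even n' then superC 0 (n' div 2) * superC 0 (m' div 2) else 0)"
      using sum_bool_words_signed_superC[of n m "Suc M"] sum_bool_words_signed_superC[OF M(1)]
      unfolding n m by (simp add: sum_bool_words_tl_signed_superC_even)
    with \<open>even n' \<longleftrightarrow> even m'\<close> show ?thesis
      unfolding n m by auto
  next
    case False
    define M where "M = (n + m) div 2"
    have M: "n' + Suc m' = 2 * M" "Suc n' + m' = 2 * M" and "even n' \<longleftrightarrow> odd m'"
      using False unfolding n m M_def by presburger+
    have "(\<Sum>w\<in>bool_words n m. signed_superC M (descents (tl w)))
        = (if even n' then superC 0 (n' div 2) * superC 0 (Suc m' div 2) else 0)
          + (if even (Suc n') then superC 0 (Suc n' div 2) * superC 0 (m' div 2) else 0)"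
      unfolding n m sum_bool_words_descents_tl sum_bool_words_signed_superC[OF M(1)] sum_bool_words_signed_superC[OF M(2)] ..
    with \<open>even n' \<longleftrightarrow> odd m'\<close> show ?thesis
      unfolding M_def n m by auto
  qed
qed

theorem corollary7p3:
  fixes n m :: nat
  shows "((\<Sum>\<sigma>\<in>shuffleS n m. (-1) ^ pminus (n + m) \<sigma>
            * superC (pminus (n + m) \<sigma>) ((n + m) div 2 - pminus (n + m) \<sigma>))
         = (if even n \<or> even m then superC 0 (n div 2) * superC 0 (m div 2)
            else 4 * superC 0 (n div 2) * superC 0 (m div 2)))
         \<and> (even (n + m) \<longrightarrow>
         (\<Sum>\<sigma>\<in>shuffleS n m. (-1) ^ pplus (n + m) \<sigma>
            * superC (pplus (n + m) \<sigma>) ((n + m) div 2 - pplus (n + m) \<sigma>))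
         = (if even n \<and> even m then superC 0 (n div 2) * superC 0 (m div 2) else 0))"
proof (intro conjI impI)
  show "(\<Sum>\<sigma>\<in>shuffleS n m. (-1) ^ pminus (n + m) \<sigma>
            * superC (pminus (n + m) \<sigma>) ((n + m) div 2 - pminus (n + m) \<sigma>))
         = (if even n \<or> even m then superC 0 (n div 2) * superC 0 (m div 2)
            else 4 * superC 0 (n div 2) * superC 0 (m div 2))"
    using sum_shuffleS_pminus[of "signed_superC ((n + m) div 2)" n m] sum_bool_words_tl_signed_superC[of n m]
    by (simp add: signed_superC_def)
next
  assume "even (n + m)"
  then have "n + m = 2 * ((n + m) div 2)" "even n \<longleftrightarrow> even n \<and> even m"
    by auto
  then show "(\<Sum>\<sigma>\<in>shuffleS n m. (-1) ^ pplus (n + m) \<sigma>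
            * superC (pplus (n + m) \<sigma>) ((n + m) div 2 - pplus (n + m) \<sigma>))
         = (if even n \<and> even m then superC 0 (n div 2) * superC 0 (m div 2) else 0)"
    using sum_shuffleS_pplus[of "signed_superC ((n + m) div 2)" n m] sum_bool_words_signed_superC
    by (simp add: signed_superC_def)
qed

end
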